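(* Let $n\ge1$, $\omega,\varphi\in\mathbb{R}^n$, $\mathbf{a}\in\mathbb{R}^{n\times n}$ with rows $a_1,\dots,a_n\in\mathbb{R}^n$ (entries $a_{ij}$), $b,c\in\mathbb{R}^n$, $d\in\mathbb{R}$, and let $$f(x)=\sum_{i=1}^n c_i\sin\Big(\sum_{j=1}^n a_{ij}\sin(\omega_jx+\varphi_j)+b_i\Big)+d.$$ For $\mathbf{k}\in\mathbb{Z}^n$, $u\in\mathbb{R}^n$ and $\beta\in\mathbb{R}$ put $\alpha_{\mathbf{k}}(u)=\prod_{j=1}^nJ_{k_j}(u_j)$, $A_{\mathbf{k}}(u,\beta)=\alpha_{\mathbf{k}}(u)\sin(\langle\mathbf{k},\varphi\rangle+\beta)$, $B_{\mathbf{k}}(u,\beta)=\alpha_{\mathbf{k}}(u)\cos(\langle\mathbf{k},\varphi\rangle+\beta)$, and let $A_{\mathbf{k}}=(A_{\mathbf{k}}(a_1,b_1),\dots,A_{\mathbf{k}}(a_n,b_n))$, $B_{\mathbf{k}}=(B_{\mathbf{k}}(a_1,b_1),\dots,B_{\mathbf{k}}(a_n,b_n))$. Then for all $x\in\mathbb{R}$, $$f(x)=\sum_{\mathbf{k}\in\mathbb{Z}^n}\langle c,A_{\mathbf{k}}\rangle\cos\big(\langle\mathbf{k},\omega\rangle x\big)+\langle c,B_{\mathbf{k}}\rangle\sin\big(\langle\mathbf{k},\omega\rangle x\big)+d.$$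
   Context: $J_k$ is the Bessel function of the first kind of integer order $k$; $\langle\cdot,\cdot\rangle$ is the standard inner product on $\mathbb{R}^n$ (so $\langle\mathbf{k},\omega\rangle=\sum_jk_j\omega_j$). The function $f$ is a sinusoidal network with one hidden layer of width $n$: first layer $x\mapsto\sin(\omega x+\varphi)$, hidden layer $y\mapsto\sin(\mathbf{a}y+b)$, linear output $z\mapsto\langle c,z\rangle+d$. *)

theory Defs
  imports "HOL-Analysis.Analysis"
begin

definition bessel_J_nat :: "nat \<Rightarrow> real \<Rightarrow> real" where
  "bessel_J_nat n x = (\<Sum>m. (-1) ^ m / (fact m * fact (m + n)) * (x / 2) ^ (2 * m + n))"

definition bessel_J :: "int \<Rightarrow> real \<Rightarrow> real" where
  "bessel_J k x = (if 0 \<le> k then bessel_J_nat (nat k) x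
                   else (-1) ^ nat (- k) * bessel_J_nat (nat (- k)) x)"

definition int_inner :: "int ^ 'n \<Rightarrow> real ^ 'n \<Rightarrow> real" where
  "int_inner k v = (\<Sum>j\<in>UNIV. of_int (k $ j) * v $ j)"

definition sin_net ::
  "real ^ 'n \<Rightarrow> real ^ 'n \<Rightarrow> real ^ 'n ^ 'n \<Rightarrow> real ^ 'n \<Rightarrow> real ^ 'n \<Rightarrow> real \<Rightarrow> real \<Rightarrow> real" where
  "sin_net \<omega> \<phi> a b c d x =
     (\<Sum>i\<in>UNIV. c $ i * sin ((\<Sum>j\<in>UNIV. a $ i $ j * sin (\<omega> $ j * x + \<phi> $ j)) + b $ i)) + d"

definition alpha_k :: "int ^ 'n \<Rightarrow> real ^ 'n \<Rightarrow> real" where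
  "alpha_k k u = (\<Prod>j\<in>UNIV. bessel_J (k $ j) (u $ j))"

definition A_k :: "real ^ 'n \<Rightarrow> int ^ 'n \<Rightarrow> real ^ 'n \<Rightarrow> real \<Rightarrow> real" where
  "A_k \<phi> k u \<beta> = alpha_k k u * sin (int_inner k \<phi> + \<beta>)"

definition B_k :: "real ^ 'n \<Rightarrow> int ^ 'n \<Rightarrow> real ^ 'n \<Rightarrow> real \<Rightarrow> real" where
  "B_k \<phi> k u \<beta> = alpha_k k u * cos (int_inner k \<phi> + \<beta>)"

definition A_vec :: "real ^ 'n \<Rightarrow> real ^ 'n ^ 'n \<Rightarrow> real ^ 'n \<Rightarrow> int ^ 'n \<Rightarrow> real ^ 'n" where
  "A_vec \<phi> a b k = (\<chi> i. A_k \<phi> k (a $ i) (b $ i))"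

definition B_vec :: "real ^ 'n \<Rightarrow> real ^ 'n ^ 'n \<Rightarrow> real ^ 'n \<Rightarrow> int ^ 'n \<Rightarrow> real ^ 'n" where
  "B_vec \<phi> a b k = (\<chi> i. B_k \<phi> k (a $ i) (b $ i))"

end

theory Submission
  imports Defs
begin

(* Write \<theta> = x \<omega> + \<phi>. Each hidden unit is
   sin (\<Sum>j a_ij sin \<theta>_j + b_i) = Im (cis b_i \<Prod>j cis (a_ij sin \<theta>_j)).
   By the Jacobi-Anger expansion cis (u sin t) = \<Sum>k J_k(u) cis (k t), an absolutely convergent
   series over k \<in> \<int>, so the finite product is the absolutely convergent sum over \<int>^n of
   \<alpha>_k(a_i) cis (<k, \<theta>>). Taking imaginary parts, multiplying by c_i, summing over i and
   splitting sin (<k, \<omega>> x + <k, \<phi>> + b_i) by the addition theorem gives the claim.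
   Jacobi-Anger itself is the generating function exp (u/2 (w - 1/w)) = \<Sum>k J_k(u) w^k,
   obtained by multiplying the series of exp (u w / 2) and exp (-u / (2 w)) and collecting the
   terms w^p w^-q by k = p - q. *)

lemma has_sum_sum:
  fixes f :: "'i \<Rightarrow> 'a \<Rightarrow> 'b::{topological_comm_monoid_add, t2_space}"
  assumes "finite I" "\<And>i. i \<in> I \<Longrightarrow> (f i has_sum s i) A"
  shows "((\<lambda>x. \<Sum>i\<in>I. f i x) has_sum (\<Sum>i\<in>I. s i)) A"
  using assms by (induction I rule: finite_induct) (simp_all add: has_sum_add)

lemma has_sum_mult_of_abs_summable:
  fixes f g :: "_ \<Rightarrow> 'c::{banach, real_normed_field}"
  assumes f: "(\<lambda>x. norm (f x)) summable_on A" and g: "(\<lambda>y. norm (g y)) summable_on B"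
  shows "((\<lambda>(x, y). f x * g y) has_sum infsum f A * infsum g B) (A \<times> B)"
    and "(\<lambda>z. norm (case z of (x, y) \<Rightarrow> f x * g y)) summable_on A \<times> B"
proof -
  show abs: "(\<lambda>z. norm (case z of (x, y) \<Rightarrow> f x * g y)) summable_on A \<times> B"
  proof (rule Infinite_Sum.abs_summable_on_Sigma_iff[where f = "\<lambda>(x, y). f x * g y", THEN iffD2],
      intro conjI ballI)
    show "(\<lambda>y. norm (case (x, y) of (x, y) \<Rightarrow> f x * g y)) summable_on B" for x
      using g by (simp add: norm_mult summable_on_cmult_right)
    have "norm (infsum (\<lambda>y. norm (f x * g y)) B) = norm (f x) * infsum (\<lambda>y. norm (g y)) B" for x
      by (simp add: norm_mult infsum_cmult_right' infsum_nonneg)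
    then show "(\<lambda>x. norm (infsum (\<lambda>y. norm (case (x, y) of (x, y) \<Rightarrow> f x * g y)) B)) summable_on A"
      using summable_on_cmult_left[OF f] by simp
  qed
  show "((\<lambda>(x, y). f x * g y) has_sum infsum f A * infsum g B) (A \<times> B)"
  proof (rule has_sum_SigmaI[where g = "\<lambda>x. f x * infsum g B"])
    show "((\<lambda>y. case (x, y) of (x, y) \<Rightarrow> f x * g y) has_sum f x * infsum g B) B" for x
      using has_sum_cmult_right[OF has_sum_infsum[OF abs_summable_summable[OF g]]] by simp
    show "((\<lambda>x. f x * infsum g B) has_sum infsum f A * infsum g B) A"
      using has_sum_cmult_left[OF has_sum_infsum[OF abs_summable_summable[OF f]]] .
    show "(\<lambda>(x, y). f x * g y) summable_on Sigma A (\<lambda>_. B)"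
      using abs_summable_summable[OF abs] by simp
  qed
qed

lemma has_sum_prod_vec:
  fixes f :: "'n::finite \<Rightarrow> 'b::countable \<Rightarrow> 'c::{real_normed_field, banach, second_countable_topology}"
  assumes "\<And>j. (\<lambda>y. norm (f j y)) summable_on UNIV"
  shows "((\<lambda>k::'b^'n. \<Prod>j\<in>UNIV. f j (k $ j)) has_sum (\<Prod>j\<in>UNIV. infsum (f j) UNIV)) UNIV"
proof -
  let ?g = "\<lambda>k::'n \<Rightarrow> 'b. \<Prod>j\<in>UNIV. f j (k j)"
  have PiE_UNIV: "PiE UNIV (\<lambda>_. UNIV) = (UNIV :: ('n \<Rightarrow> 'b) set)"
    by auto
  have "Infinite_Set_Sum.abs_summable_on ?g (PiE UNIV (\<lambda>_. UNIV))"
    using assms by (intro abs_summable_on_prod_PiE) (auto simp: abs_summable_equivalent[symmetric])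
  then have "?g summable_on UNIV"
    unfolding PiE_UNIV abs_summable_equivalent[symmetric] by (rule abs_summable_summable)
  moreover have "infsum ?g UNIV = (\<Prod>j\<in>UNIV. infsum (f j) UNIV)"
    using infsum_prod_PiE_abs[of UNIV f "\<lambda>_. UNIV"] assms unfolding PiE_UNIV by simp
  ultimately have "(?g has_sum (\<Prod>j\<in>UNIV. infsum (f j) UNIV)) UNIV"
    by (metis has_sum_infsum)
  moreover have "bij_betw vec_nth (UNIV :: ('b^'n) set) UNIV"
    by (rule bij_betwI[where g = vec_lambda]) auto
  ultimately show ?thesis
    using has_sum_reindex_bij_betw[of vec_nth UNIV UNIV ?g] by simp
qed

lemma abs_summable_on_fibre_sums:
  fixes F :: "'a \<times> 'b \<Rightarrow> 'c::banach"
  assumes F: "(\<lambda>z. norm (F z)) summable_on Sigma A B"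
    and G: "\<And>x. x \<in> A \<Longrightarrow> ((\<lambda>y. F (x, y)) has_sum G x) (B x)"
  shows "(\<lambda>x. norm (G x)) summable_on A"
proof -
  have fibre: "\<And>x. x \<in> A \<Longrightarrow> (\<lambda>y. norm (F (x, y))) summable_on B x"
    and sums: "(\<lambda>x. norm (infsum (\<lambda>y. norm (F (x, y))) (B x))) summable_on A"
    using Infinite_Sum.abs_summable_on_Sigma_iff[THEN iffD1, OF F] by auto
  show ?thesis
  proof (rule Infinite_Sum.abs_summable_on_comparison_test[OF sums])
    fix x assume "x \<in> A"
    then have "norm (G x) \<le> infsum (\<lambda>y. norm (F (x, y))) (B x)"
      using G fibre norm_infsum_bound by (metis infsumI)
    then show "norm (G x) \<le> norm (infsum (\<lambda>y. norm (F (x, y))) (B x))"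
      by simp
  qed
qed

lemma cis_sum: "cis (\<Sum>x\<in>A. f x) = (\<Prod>x\<in>A. cis (f x))"
  by (induction A rule: infinite_finite_induct) (simp_all add: cis_mult[symmetric])

lemma bessel_J_nat_has_sum:
  "((\<lambda>m. (-1) ^ m / (fact m * fact (m + n)) * (u / 2) ^ (2 * m + n)) has_sum bessel_J_nat n u) UNIV"
proof -
  let ?t = "\<lambda>m. (-1) ^ m / (fact m * fact (m + n)) * (u / 2) ^ (2 * m + n) :: real"
  define v where "v = \<bar>u / 2\<bar>"
  have bound: "norm (?t m) \<le> v ^ n * ((v\<^sup>2) ^ m /\<^sub>R fact m)" for m
  proof -
    have "norm (?t m) = v ^ (2 * m + n) / (fact m * fact (m + n))"
      unfolding v_def real_norm_def abs_mult abs_divide power_abs by simp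
    also have "\<dots> \<le> v ^ (2 * m + n) / fact m"
      by (rule divide_left_mono) (auto simp: v_def fact_ge_1)
    also have "\<dots> = v ^ n * ((v\<^sup>2) ^ m /\<^sub>R fact m)"
      by (simp add: power_add power_mult divide_inverse)
    finally show ?thesis .
  qed
  have "summable (\<lambda>m. v ^ n * ((v\<^sup>2) ^ m /\<^sub>R fact m))"
    by (rule summable_mult[OF summable_exp_generic])
  then have "summable (\<lambda>m. norm (?t m))"
    by (rule summable_comparison_test') (use bound in simp)
  moreover have "?t sums bessel_J_nat n u"
    unfolding bessel_J_nat_def using summable_norm_cancel[OF calculation] by (rule summable_sums)
  ultimately show ?thesis
    by (rule norm_summable_imp_has_sum)
qed

(* Both signs of k at once: one of nat k and nat (- k) is zero. *)
lemma bessel_J_has_sum: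
  "((\<lambda>m. (-1) ^ (m + nat (- k)) * (u / 2) ^ (2 * m + nat k + nat (- k))
          / (fact (m + nat k) * fact (m + nat (- k)))) has_sum bessel_J k u) UNIV"
proof (cases "0 \<le> k")
  case True
  then show ?thesis
    using bessel_J_nat_has_sum[of "nat k" u] by (simp add: bessel_J_def mult.commute)
next
  case False
  then show ?thesis
    using has_sum_cmult_right[OF bessel_J_nat_has_sum, of "(-1) ^ nat (- k)" "nat (- k)" u]
    by (simp add: bessel_J_def power_add mult_ac)
qed

lemma exp_series_has_sum:
  fixes z :: "'a::{real_normed_algebra_1, banach}"
  shows "((\<lambda>p. z ^ p /\<^sub>R fact p) has_sum exp z) UNIV"
    and "(\<lambda>p. norm (z ^ p /\<^sub>R fact p)) summable_on UNIV"
  using norm_summable_imp_has_sum[OF summable_norm_exp exp_converges]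
    norm_summable_imp_summable_on[of "\<lambda>p. norm (z ^ p /\<^sub>R fact p)"] summable_norm_exp[of z]
  by simp_all

lemma exp_series_product_term:
  fixes c w :: complex
  assumes "w \<noteq> 0"
  shows "(c * w) ^ p /\<^sub>R fact p * ((- c / w) ^ q /\<^sub>R fact q)
    = (-1) ^ q * c ^ (p + q) / (fact p * fact q) * w powi (int p - int q)"
  using assms
  by (auto simp: scaleR_conv_of_real power_mult_distrib power_divide power_add power_int_diff
      power_minus[of "c / w"] power_minus[of c])
    (simp add: divide_inverse mult_ac)

lemma exp_series_product_diagonal_term:
  fixes w :: complex
  assumes "w \<noteq> 0"
  shows "(of_real (u / 2) * w) ^ (m + nat k) /\<^sub>R fact (m + nat k)
           * ((- of_real (u / 2) / w) ^ (m + nat (- k)) /\<^sub>R fact (m + nat (- k)))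
    = of_real ((-1) ^ (m + nat (- k)) * (u / 2) ^ (2 * m + nat k + nat (- k))
        / (fact (m + nat k) * fact (m + nat (- k)))) * w powi k"
proof -
  have "(of_real (u / 2) * w) ^ (m + nat k) /\<^sub>R fact (m + nat k)
           * ((- of_real (u / 2) / w) ^ (m + nat (- k)) /\<^sub>R fact (m + nat (- k)))
      = (-1) ^ (m + nat (- k)) * of_real (u / 2) ^ (m + nat k + (m + nat (- k)))
        / (fact (m + nat k) * fact (m + nat (- k))) * w powi (int (m + nat k) - int (m + nat (- k)))"
    by (rule exp_series_product_term[OF assms])
  also have "m + nat k + (m + nat (- k)) = 2 * m + nat k + nat (- k)"
    by simp
  also have "int (m + nat k) - int (m + nat (- k)) = k"
    by simp
  finally show ?thesis
    by simp
qed

lemma bessel_J_generating_function: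
  fixes u :: real and w :: complex
  assumes "w \<noteq> 0"
  shows "((\<lambda>k. of_real (bessel_J k u) * w powi k) has_sum exp (of_real (u / 2) * (w - inverse w))) UNIV"
    and "(\<lambda>k. norm (of_real (bessel_J k u) * w powi k)) summable_on UNIV"
proof -
  define X where "X = of_real (u / 2) * w"
  define Y where "Y = - of_real (u / 2) / w"
  define F where "F = (\<lambda>(p, q). X ^ p /\<^sub>R fact p * (Y ^ q /\<^sub>R fact q))"
  define G where "G k = of_real (bessel_J k u) * w powi k" for k
  have F_sum: "(F has_sum exp X * exp Y) UNIV" and F_abs: "(\<lambda>z. norm (F z)) summable_on UNIV"
    using has_sum_mult_of_abs_summable[OF exp_series_has_sum(2) exp_series_has_sum(2), of X Y]
    unfolding F_def infsumI[OF exp_series_has_sum(1)] by simp_all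
  \<comment> \<open>(p, q) \<mapsto> (p - q, min p q) is a bijection from \<nat> \<times> \<nat> to \<int> \<times> \<nat>; \<phi> is its inverse.\<close>
  define \<phi> where "\<phi> = (\<lambda>(k :: int, m :: nat). (m + nat k, m + nat (- k)))"
  define \<psi> where "\<psi> = (\<lambda>(p :: nat, q :: nat). (int p - int q, min p q))"
  have F\<phi>_sum: "((\<lambda>z. F (\<phi> z)) has_sum exp X * exp Y) (UNIV \<times> UNIV)"
    unfolding UNIV_Times_UNIV using F_sum
    by (subst has_sum_reindex_bij_witness[of UNIV \<psi> \<phi> UNIV F]) (auto simp: \<phi>_def \<psi>_def)
  have F\<phi>_abs: "(\<lambda>z. norm (F (\<phi> z))) summable_on UNIV \<times> UNIV"
    unfolding UNIV_Times_UNIV using F_abs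
    by (subst summable_on_reindex_bij_witness[of UNIV \<psi> \<phi> UNIV "\<lambda>z. norm (F z)"])
      (auto simp: \<phi>_def \<psi>_def)
  have fibre: "((\<lambda>m. F (\<phi> (k, m))) has_sum G k) UNIV" for k
  proof -
    have "F (\<phi> (k, m)) = of_real ((-1) ^ (m + nat (- k)) * (u / 2) ^ (2 * m + nat k + nat (- k))
        / (fact (m + nat k) * fact (m + nat (- k)))) * w powi k" for m
      unfolding F_def X_def Y_def \<phi>_def case_prod_conv by (rule exp_series_product_diagonal_term[OF assms])
    then show ?thesis
      using has_sum_cmult_right[OF has_sum_of_real[OF bessel_J_has_sum], of "w powi k" k u]
      by (simp add: G_def mult.commute)
  qed
  have XY: "X + Y = of_real (u / 2) * (w - inverse w)"
    unfolding X_def Y_def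
    by (simp only: divide_inverse ring_distribs mult_minus_left mult_minus_right diff_conv_add_uminus)
  have "exp X * exp Y = exp (of_real (u / 2) * (w - inverse w))"
    unfolding exp_add[symmetric] XY ..
  then show "(G has_sum exp (of_real (u / 2) * (w - inverse w))) UNIV"
    using has_sum_SigmaD[OF F\<phi>_sum fibre] by simp
  show "(\<lambda>k. norm (G k)) summable_on UNIV"
    using abs_summable_on_fibre_sums[OF F\<phi>_abs fibre] .
qed

lemma jacobi_anger:
  fixes u t :: real
  shows "((\<lambda>k. of_real (bessel_J k u) * cis (of_int k * t)) has_sum cis (u * sin t)) UNIV"
    and "(\<lambda>k. norm (of_real (bessel_J k u) * cis (of_int k * t))) summable_on UNIV"
proof -
  have "of_real (u / 2) * (cis t - inverse (cis t)) = \<i> * of_real (u * sin t)"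
    by (simp add: complex_eq_iff)
  then have "exp (of_real (u / 2) * (cis t - inverse (cis t))) = cis (u * sin t)"
    by (simp only: cis_conv_exp)
  then show "((\<lambda>k. of_real (bessel_J k u) * cis (of_int k * t)) has_sum cis (u * sin t)) UNIV"
    and "(\<lambda>k. norm (of_real (bessel_J k u) * cis (of_int k * t))) summable_on UNIV"
    using bessel_J_generating_function[of "cis t" u] by (simp_all add: cis_power_int)
qed

lemma int_inner_add: "int_inner k (v + w) = int_inner k v + int_inner k w"
  by (simp add: int_inner_def distrib_left sum.distrib)

lemma int_inner_scaleR: "int_inner k (x *\<^sub>R v) = x * int_inner k v"
  by (simp add: int_inner_def sum_distrib_left mult_ac)

lemma sin_sum_sin_has_sum:
  fixes r \<theta> :: "real ^ 'n" and \<beta> :: real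
  shows "((\<lambda>k. alpha_k k r * sin (int_inner k \<theta> + \<beta>))
          has_sum sin ((\<Sum>j\<in>UNIV. r $ j * sin (\<theta> $ j)) + \<beta>)) UNIV"
proof -
  define f where "f j k = of_real (bessel_J k (r $ j)) * cis (of_int k * \<theta> $ j)" for j k
  have "infsum (f j) UNIV = cis (r $ j * sin (\<theta> $ j))" for j
    unfolding f_def by (rule infsumI) (rule jacobi_anger(1))
  then have "((\<lambda>k. \<Prod>j\<in>UNIV. f j (k $ j)) has_sum (\<Prod>j\<in>UNIV. cis (r $ j * sin (\<theta> $ j)))) UNIV"
    using has_sum_prod_vec[of f] jacobi_anger(2) unfolding f_def by simp
  moreover have "(\<Prod>j\<in>UNIV. f j (k $ j)) = of_real (alpha_k k r) * cis (int_inner k \<theta>)" for k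
    by (simp add: f_def alpha_k_def int_inner_def prod.distrib cis_sum sum_distrib_left mult_ac)
  ultimately have "((\<lambda>k. Im (of_real (alpha_k k r) * cis (int_inner k \<theta>) * cis \<beta>))
      has_sum Im (cis (\<Sum>j\<in>UNIV. r $ j * sin (\<theta> $ j)) * cis \<beta>)) UNIV"
    by (intro has_sum_Im has_sum_cmult_left) (simp add: cis_sum)
  then show ?thesis
    by (simp add: cis_mult mult.assoc)
qed

lemma inner_A_vec_cos_add_inner_B_vec_sin:
  "(c \<bullet> A_vec \<phi> a b k) * cos t + (c \<bullet> B_vec \<phi> a b k) * sin t
    = (\<Sum>i\<in>UNIV. c $ i * (alpha_k k (a $ i) * sin (t + int_inner k \<phi> + b $ i)))"
proof -
  have "c $ i * A_k \<phi> k (a $ i) (b $ i) * cos t + c $ i * B_k \<phi> k (a $ i) (b $ i) * sin t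
      = c $ i * (alpha_k k (a $ i) * sin (t + int_inner k \<phi> + b $ i))" for i
    unfolding A_k_def B_k_def add.assoc sin_add[of t] by (simp add: algebra_simps)
  then show ?thesis
    by (simp add: inner_vec_def A_vec_def B_vec_def sum_distrib_right flip: sum.distrib)
qed

theorem theorem4:
  fixes \<omega> \<phi> b c :: "real ^ 'n" and a :: "real ^ 'n ^ 'n" and d x :: real
  shows "((\<lambda>k :: int ^ 'n.
            (c \<bullet> A_vec \<phi> a b k) * cos (int_inner k \<omega> * x)
          + (c \<bullet> B_vec \<phi> a b k) * sin (int_inner k \<omega> * x))
         has_sum (sin_net \<omega> \<phi> a b c d x - d)) UNIV"
proof -
  define \<theta> where "\<theta> = x *\<^sub>R \<omega> + \<phi>"
  have "((\<lambda>k. \<Sum>i\<in>UNIV. c $ i * (alpha_k k (a $ i) * sin (int_inner k \<theta> + b $ i)))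
      has_sum (\<Sum>i\<in>UNIV. c $ i * sin ((\<Sum>j\<in>UNIV. a $ i $ j * sin (\<theta> $ j)) + b $ i))) UNIV"
    by (intro has_sum_sum has_sum_cmult_right sin_sum_sin_has_sum) simp
  moreover have "(\<Sum>i\<in>UNIV. c $ i * sin ((\<Sum>j\<in>UNIV. a $ i $ j * sin (\<theta> $ j)) + b $ i))
      = sin_net \<omega> \<phi> a b c d x - d"
    by (simp add: sin_net_def \<theta>_def mult.commute)
  moreover have "int_inner k \<theta> = int_inner k \<omega> * x + int_inner k \<phi>" for k
    by (simp add: \<theta>_def int_inner_add int_inner_scaleR mult.commute)
  ultimately show ?thesis
    by (simp add: inner_A_vec_cos_add_inner_B_vec_sin add.assoc)
qed

end
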